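(* Consider $\mathbb{Z}$ with the metric $d(x,y)=|x-y|$ and the $c_1$-adjacency (i.e., $x,y$ are adjacent iff $|x-y|=1$). Let $S,T:\mathbb{Z}\to\mathbb{Z}$ be such that $x\neq y$ implies $d(S(x),S(y))<d(T(x),T(y))$. If $T$ is $c_1$-continuous, then $S$ is a constant function.
   Context: A function $f:(X,\kappa)\to(Y,\lambda)$ between digital images (sets of lattice points with adjacency relations) is $(\kappa,\lambda)$-continuous iff whenever $x$ and $x'$ are $\kappa$-adjacent in $X$, either $f(x)=f(x')$ or $f(x)$ and $f(x')$ are $\lambda$-adjacent in $Y$. Here $c_1$-continuous means $(c_1,c_1)$-continuous. *)

theory Defs
  imports Main
begin

definition c1_adj :: "int \<Rightarrow> int \<Rightarrow> bool" where
  "c1_adj x y \<longleftrightarrow> \<bar>x - y\<bar> = 1"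

definition c1_continuous :: "(int \<Rightarrow> int) \<Rightarrow> bool" where
  "c1_continuous f \<longleftrightarrow>
     (\<forall>x x'. c1_adj x x' \<longrightarrow> f x = f x' \<or> c1_adj (f x) (f x'))"

end

theory Submission
  imports Defs
begin

lemma c1_continuous_succ_dist_le:
  assumes "c1_continuous f"
  shows "\<bar>f (x + 1) - f x\<bar> \<le> 1"
proof -
  have "c1_adj (x + 1) x" by (simp add: c1_adj_def)
  with assms have "f (x + 1) = f x \<or> c1_adj (f (x + 1)) (f x)"
    unfolding c1_continuous_def by blast
  then show ?thesis by (auto simp: c1_adj_def)
qed

lemma int_fun_constant_if_succ_invariant:
  fixes f :: "int \<Rightarrow> 'a"
  assumes succ: "\<And>x. f (x + 1) = f x"
  shows "f x = f 0"
proof (induction x rule: int_induct[where k = 0])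
  case base
  then show ?case by simp
next
  case (step1 i)
  then show ?case using succ[of i] by simp
next
  case (step2 i)
  then show ?case using succ[of "i - 1"] by simp
qed

theorem proposition6p4:
  fixes S T :: "int \<Rightarrow> int"
  assumes contr: "\<And>x y. x \<noteq> y \<Longrightarrow> \<bar>S x - S y\<bar> < \<bar>T x - T y\<bar>"
    and cont: "c1_continuous T"
  shows "\<exists>c. \<forall>x. S x = c"
proof -
  have "S (x + 1) = S x" for x
  proof -
    have "\<bar>S (x + 1) - S x\<bar> < \<bar>T (x + 1) - T x\<bar>" using contr[of "x + 1" x] by simp
    moreover have "\<bar>T (x + 1) - T x\<bar> \<le> 1" using cont by (rule c1_continuous_succ_dist_le)
    ultimately show ?thesis by linarith
  qed
  then have "\<forall>x. S x = S 0" using int_fun_constant_if_succ_invariant by blast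
  then show ?thesis by blast
qed

end
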